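(* For every set $S\subseteq\mathbb{R}$ of nonnegative reals, the category $\overrightarrow{\mathbf{U}}_S$ has the Ramsey property. Consequently, the category $\overrightarrow{\mathbf{U}}$ of all finite convexly ordered ultrametric spaces with embeddings has the Ramsey property.
   Context: A convexly ordered ultrametric space is a structure $(U,d,<)$ where $d:U^2\to\mathbb{R}$ is an ultrametric (a metric with $d(x,z)\le\max\{d(x,y),d(y,z)\}$) and $<$ is a linear order on $U$ such that every closed ball $B(u,r)=\{y: d(u,y)\le r\}$ is convex with respect to $<$ (if $x,y\in B(u,r)$ and $x<z<y$ then $z\in B(u,r)$). Embeddings are injections $f$ with $d(f(x),f(y))=d(x,y)$ and $x<y\iff f(x)<f(y)$. The spectre of a space is $\mathrm{spec}(\mathcal{U})=\{d(x,y):x,y\in U\}$. $\overrightarrow{\mathbf{U}}$ is the category of finite convexly ordered ultrametric spaces with embeddings, and $\overrightarrow{\mathbf{U}}_S$ is its full subcategory of those $\mathcal{U}$ with $\mathrm{spec}(\mathcal{U})\subseteq S$. A category $\mathbf{C}$ has the Ramsey property if for every integer $k\ge2$ and all objects $\mathcal{A},\mathcal{B}$ with $\hom(\mathcal{A},\mathcal{B})\ne\varnothing$ there is an object $\mathcal{C}$ such that for every partition $\hom(\mathcal{A},\mathcal{C})=\Sigma_1\cup\dots\cup\Sigma_k$ into pairwise disjoint sets there are $i$ and $w\in\hom(\mathcal{B},\mathcal{C})$ with $w\cdot\hom(\mathcal{A},\mathcal{B})\subseteq\Sigma_i$. *)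

theory Defs
  imports Main "HOL-Library.FuncSet" Complex_Main
begin

record 'a ous =
  carrier :: "'a set"
  dist :: "'a \<Rightarrow> 'a \<Rightarrow> real"
  less :: "'a \<Rightarrow> 'a \<Rightarrow> bool"

definition ultrametric_on :: "'a set \<Rightarrow> ('a \<Rightarrow> 'a \<Rightarrow> real) \<Rightarrow> bool" where
  "ultrametric_on U d \<longleftrightarrow>
     (\<forall>x\<in>U. \<forall>y\<in>U. d x y \<ge> 0 \<and> (d x y = 0 \<longleftrightarrow> x = y) \<and> d x y = d y x) \<and>
     (\<forall>x\<in>U. \<forall>y\<in>U. \<forall>z\<in>U. d x z \<le> d x y + d y z) \<and>
     (\<forall>x\<in>U. \<forall>y\<in>U. \<forall>z\<in>U. d x z \<le> max (d x y) (d y z))"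

definition strict_linear_order_on :: "'a set \<Rightarrow> ('a \<Rightarrow> 'a \<Rightarrow> bool) \<Rightarrow> bool" where
  "strict_linear_order_on U lt \<longleftrightarrow>
     (\<forall>x\<in>U. \<not> lt x x) \<and>
     (\<forall>x\<in>U. \<forall>y\<in>U. \<forall>z\<in>U. lt x y \<and> lt y z \<longrightarrow> lt x z) \<and>
     (\<forall>x\<in>U. \<forall>y\<in>U. x \<noteq> y \<longrightarrow> lt x y \<or> lt y x)"

definition cball_in :: "'a ous \<Rightarrow> 'a \<Rightarrow> real \<Rightarrow> 'a set" where
  "cball_in M u r = {y \<in> carrier M. dist M u y \<le> r}"

definition convex_in :: "'a ous \<Rightarrow> 'a set \<Rightarrow> bool" where
  "convex_in M B \<longleftrightarrow>
     (\<forall>x\<in>B. \<forall>y\<in>B. \<forall>z\<in>carrier M. less M x z \<and> less M z y \<longrightarrow> z \<in> B)"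

definition fcous :: "'a ous \<Rightarrow> bool" where
  "fcous M \<longleftrightarrow> finite (carrier M) \<and> ultrametric_on (carrier M) (dist M) \<and>
     strict_linear_order_on (carrier M) (less M) \<and>
     (\<forall>u\<in>carrier M. \<forall>r::real. convex_in M (cball_in M u r))"

definition spec :: "'a ous \<Rightarrow> real set" where
  "spec M = {dist M x y | x y. x \<in> carrier M \<and> y \<in> carrier M}"

definition hom :: "'a ous \<Rightarrow> 'b ous \<Rightarrow> ('a \<Rightarrow> 'b) set" where
  "hom A B = {f. f \<in> carrier A \<rightarrow>\<^sub>E carrier B \<and> inj_on f (carrier A) \<and>
     (\<forall>x\<in>carrier A. \<forall>y\<in>carrier A. dist B (f x) (f y) = dist A x y \<and>
        (less A x y \<longleftrightarrow> less B (f x) (f y)))}"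

definition ramsey_property :: "'a ous set \<Rightarrow> bool" where
  "ramsey_property Ob \<longleftrightarrow>
     (\<forall>k::nat. k \<ge> 2 \<longrightarrow> (\<forall>A\<in>Ob. \<forall>B\<in>Ob. hom A B \<noteq> {} \<longrightarrow>
       (\<exists>C\<in>Ob. \<forall>\<Sigma> :: nat \<Rightarrow> ('a \<Rightarrow> 'a) set.
          ((\<Union>i\<in>{1..k}. \<Sigma> i) = hom A C \<and>
           (\<forall>i\<in>{1..k}. \<forall>j\<in>{1..k}. i \<noteq> j \<longrightarrow> \<Sigma> i \<inter> \<Sigma> j = {}))
          \<longrightarrow> (\<exists>i\<in>{1..k}. \<exists>w\<in>hom B C.
                 (\<lambda>f. compose (carrier A) w f) ` hom A B \<subseteq> \<Sigma> i))))"

end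

theory Submission
  imports Defs "HOL-Library.Countable" "HOL-Library.Ramsey"
begin

text \<open>The nonzero distances of a finite space \<open>B\<close> form a finite scale
  \<open>u 0 > \<dots> > u (n - 1) > 0\<close>. Words of length \<open>n\<close> over \<open>\<nat>\<close>, with distance \<open>u k\<close> between words
  first differing at position \<open>k\<close> and the lexicographic order, form a convexly ordered ultrametric
  space, and every space with distances on the scale embeds into it by canonical words: letter \<open>s\<close>
  of the word of \<open>x\<close> names the leftmost point of the open ball of radius \<open>u s\<close> around \<open>x\<close>.
  An embedding \<open>A \<rightarrow> B\<close> acts on canonical letters by a strictly increasing map, so composing a
  relabelled copy of \<open>B\<close> with an embedding gives an increasing relabelling of \<open>A\<close>. Hence the finite
  Ramsey theorem for subsets of letters yields the Ramsey property.\<close>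

section \<open>Words and the first-difference ultrametric\<close>

definition first_diff :: "'a list \<Rightarrow> 'a list \<Rightarrow> nat" where
  "first_diff xs ys = (LEAST k. xs ! k \<noteq> ys ! k)"

lemma first_diffD:
  assumes "length xs = length ys" "xs \<noteq> ys"
  shows "first_diff xs ys < length xs" "xs ! first_diff xs ys \<noteq> ys ! first_diff xs ys"
    "\<And>i. i < first_diff xs ys \<Longrightarrow> xs ! i = ys ! i"
proof -
  obtain k where k: "k < length xs" "xs ! k \<noteq> ys ! k"
    using assms nth_equalityI by metis
  show "xs ! first_diff xs ys \<noteq> ys ! first_diff xs ys"
    unfolding first_diff_def by (rule LeastI[of _ k]) (use k in auto)
  have "first_diff xs ys \<le> k"
    unfolding first_diff_def by (rule Least_le) (use k in auto)
  then show "first_diff xs ys < length xs" using k by simp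
  show "\<And>i. i < first_diff xs ys \<Longrightarrow> xs ! i = ys ! i"
    unfolding first_diff_def using not_less_Least by blast
qed

lemma first_diff_eqI:
  assumes "k < length xs" "\<And>i. i < k \<Longrightarrow> xs ! i = ys ! i" "xs ! k \<noteq> ys ! k"
  shows "first_diff xs ys = k"
  unfolding first_diff_def
  by (rule Least_equality) (use assms in \<open>auto simp: not_less[symmetric]\<close>)

lemma first_diff_commute: "first_diff xs ys = first_diff ys xs"
  unfolding first_diff_def by metis

lemma min_first_diff_le:
  assumes "length x = n" "length y = n" "length z = n" "x \<noteq> y" "y \<noteq> z" "x \<noteq> z"
  shows "min (first_diff x y) (first_diff y z) \<le> first_diff x z"
proof (rule ccontr)
  assume "\<not> ?thesis"
  then have "first_diff x z < first_diff x y" "first_diff x z < first_diff y z" by auto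
  then have "x ! first_diff x z = z ! first_diff x z"
    using first_diffD(3)[of x y] first_diffD(3)[of y z] assms by auto
  then show False using first_diffD(2)[of x z] assms by auto
qed

lemma first_diff_map:
  assumes "length x = length y" "x \<noteq> y" "inj_on \<phi> (set x \<union> set y)"
  shows "first_diff (map \<phi> x) (map \<phi> y) = first_diff x y" "map \<phi> x \<noteq> map \<phi> y"
proof -
  let ?k = "first_diff x y"
  have k: "?k < length x" "x ! ?k \<noteq> y ! ?k" "\<And>i. i < ?k \<Longrightarrow> x ! i = y ! i"
    using first_diffD[OF assms(1,2)] by auto
  have "\<phi> (x ! ?k) \<noteq> \<phi> (y ! ?k)"
    using k(1,2) assms(1,3) by (metis UnCI inj_on_contraD nth_mem)
  then show "first_diff (map \<phi> x) (map \<phi> y) = ?k" "map \<phi> x \<noteq> map \<phi> y"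
    using k assms(1) by (auto intro!: first_diff_eqI) (metis nth_map)
qed

definition word_less :: "'a::linorder list \<Rightarrow> 'a list \<Rightarrow> bool" where
  "word_less xs ys \<longleftrightarrow> xs \<noteq> ys \<and> xs ! first_diff xs ys < ys ! first_diff xs ys"

lemma word_less_trans:
  assumes "length x = n" "length y = n" "length z = n" "word_less x y" "word_less y z"
  shows "word_less x z"
proof -
  let ?a = "first_diff x y" and ?b = "first_diff y z"
  have a: "?a < n" "x ! ?a < y ! ?a" "\<And>i. i < ?a \<Longrightarrow> x ! i = y ! i"
    using first_diffD[of x y] assms unfolding word_less_def by auto
  have b: "?b < n" "y ! ?b < z ! ?b" "\<And>i. i < ?b \<Longrightarrow> y ! i = z ! i"
    using first_diffD[of y z] assms unfolding word_less_def by auto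
  define c where "c = min ?a ?b"
  have c: "c < n" "\<And>i. i < c \<Longrightarrow> x ! i = z ! i" using a b by (auto simp: c_def)
  have "x ! c < z ! c"
    using a b by (cases ?a ?b rule: linorder_cases) (auto simp: c_def min_def)
  moreover from this c have "first_diff x z = c" using assms by (intro first_diff_eqI) auto
  ultimately show ?thesis unfolding word_less_def by auto
qed

lemma word_less_linear:
  assumes "length x = length y" "x \<noteq> y" shows "word_less x y \<or> word_less y x"
  using first_diffD[OF assms] first_diff_commute[of x y] unfolding word_less_def
  by (auto simp: neq_iff)

lemma word_less_asym: "word_less x y \<Longrightarrow> \<not> word_less y x"
  unfolding word_less_def using first_diff_commute[of x y] by auto

lemma first_diff_between:
  assumes "length x = n" "length y = n" "length z = n" "word_less x z" "word_less z y"
  shows "first_diff x y \<le> first_diff x z"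
proof (rule ccontr)
  let ?c = "first_diff x z"
  assume "\<not> ?thesis"
  then have c: "?c < first_diff x y" by simp
  have "x \<noteq> y" using word_less_trans[OF assms(1,3,2,4,5)] word_less_def by auto
  then have xy: "\<And>i. i < first_diff x y \<Longrightarrow> x ! i = y ! i" using first_diffD(3)[of x y] assms by auto
  have xz: "x \<noteq> z" "x ! ?c < z ! ?c" using assms unfolding word_less_def by auto
  have "first_diff y z = ?c"
    using c xy xz first_diffD[of x z] assms by (intro first_diff_eqI) auto
  then have "word_less y z" unfolding word_less_def using c xy xz by auto
  then show False using assms word_less_asym by blast
qed

definition word_dist :: "(nat \<Rightarrow> real) \<Rightarrow> 'a list \<Rightarrow> 'a list \<Rightarrow> real" where
  "word_dist u xs ys = (if xs = ys then 0 else u (first_diff xs ys))"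

lemma word_dist_commute: "word_dist u x y = word_dist u y x"
  unfolding word_dist_def using first_diff_commute by metis

definition decreasing_scale :: "nat \<Rightarrow> (nat \<Rightarrow> real) \<Rightarrow> bool" where
  "decreasing_scale n u \<longleftrightarrow> (\<forall>i j. i < j \<longrightarrow> j < n \<longrightarrow> u j < u i) \<and> (\<forall>i<n. 0 < u i)"

lemma decreasing_scale_antimono:
  "decreasing_scale n u \<Longrightarrow> i \<le> j \<Longrightarrow> j < n \<Longrightarrow> u j \<le> u i"
  unfolding decreasing_scale_def by (cases "i = j") (auto intro: less_imp_le)

context
  fixes n u assumes u: "decreasing_scale n u"
begin

lemma word_dist_pos:
  "length x = n \<Longrightarrow> length y = n \<Longrightarrow> x \<noteq> y \<Longrightarrow> 0 < word_dist u x y"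
  using u first_diffD(1)[of x y] unfolding word_dist_def decreasing_scale_def by auto

lemma word_dist_nonneg: "length x = n \<Longrightarrow> length y = n \<Longrightarrow> 0 \<le> word_dist u x y"
  using word_dist_pos[of x y] by (cases "x = y") (auto simp: word_dist_def)

lemma word_dist_ultra:
  assumes "length x = n" "length y = n" "length z = n"
  shows "word_dist u x z \<le> max (word_dist u x y) (word_dist u y z)"
proof (cases "x = z \<or> x = y \<or> y = z")
  case True
  then show ?thesis
    using word_dist_nonneg[of x y] word_dist_nonneg[of y z] assms by (auto simp: word_dist_def)
next
  case False
  then have "min (first_diff x y) (first_diff y z) \<le> first_diff x z" "first_diff x z < n"
    using min_first_diff_le[OF assms] first_diffD(1)[of x z] assms by auto
  then have "u (first_diff x z) \<le> u (min (first_diff x y) (first_diff y z))"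
    using decreasing_scale_antimono[OF u] by blast
  then show ?thesis using False unfolding word_dist_def by (auto simp: min_def split: if_splits)
qed

lemma word_dist_between:
  assumes "length x = n" "length y = n" "length z = n" "word_less x z" "word_less z y"
  shows "word_dist u x z \<le> word_dist u x y"
proof -
  have "x \<noteq> z" "x \<noteq> y"
    using assms word_less_trans[OF assms(1,3,2,4,5)] by (auto simp: word_less_def)
  moreover have "first_diff x z < n" using first_diffD(1)[of x z] assms \<open>x \<noteq> z\<close> by auto
  ultimately show ?thesis
    using decreasing_scale_antimono[OF u first_diff_between[OF assms]] by (simp add: word_dist_def)
qed

end


definition words :: "nat \<Rightarrow> nat \<Rightarrow> nat list set" where
  "words n L = {xs. length xs = n \<and> set xs \<subseteq> {..<L}}"

lemma finite_words: "finite (words n L)"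
proof -
  have "words n L = {xs. set xs \<subseteq> {..<L} \<and> length xs = n}" by (auto simp: words_def)
  then show ?thesis using finite_lists_length_eq[of "{..<L}" n] by simp
qed

abbreviation word_of :: "nat \<Rightarrow> nat list" where "word_of \<equiv> from_nat"

definition word_space :: "nat \<Rightarrow> (nat \<Rightarrow> real) \<Rightarrow> nat \<Rightarrow> nat ous" where
  "word_space n u L = \<lparr>carrier = to_nat ` words n L,
     dist = (\<lambda>x y. word_dist u (word_of x) (word_of y)),
     less = (\<lambda>x y. word_less (word_of x) (word_of y))\<rparr>"

lemma word_space_simps:
  "carrier (word_space n u L) = to_nat ` words n L"
  "dist (word_space n u L) x y = word_dist u (word_of x) (word_of y)"
  "less (word_space n u L) x y = word_less (word_of x) (word_of y)"
  by (simp_all add: word_space_def)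

lemma word_space_carrier_length: "x \<in> carrier (word_space n u L) \<Longrightarrow> length (word_of x) = n"
  by (auto simp: word_space_simps words_def)

lemma inj_on_word_of: "inj_on word_of (carrier (word_space n u L))"
  by (auto simp: word_space_simps inj_on_def)

lemma word_space_ultrametric:
  assumes u: "decreasing_scale n u"
  shows "ultrametric_on (carrier (word_space n u L)) (dist (word_space n u L))"
  unfolding ultrametric_on_def word_space_simps(2)
proof (intro conjI ballI)
  fix x y assume "x \<in> carrier (word_space n u L)" "y \<in> carrier (word_space n u L)"
  note xy = this word_space_carrier_length[OF this(1)] word_space_carrier_length[OF this(2)]
  show "0 \<le> word_dist u (word_of x) (word_of y)" by (rule word_dist_nonneg[OF u xy(3,4)])
  show "word_dist u (word_of x) (word_of y) = 0 \<longleftrightarrow> x = y"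
    using word_dist_pos[OF u xy(3,4)] inj_onD[OF inj_on_word_of _ xy(1,2)]
    by (auto simp: word_dist_def)
  show "word_dist u (word_of x) (word_of y) = word_dist u (word_of y) (word_of x)"
    by (rule word_dist_commute)
next
  fix x y z
  assume "x \<in> carrier (word_space n u L)" "y \<in> carrier (word_space n u L)"
    "z \<in> carrier (word_space n u L)"
  note xyz = word_space_carrier_length[OF this(1)] word_space_carrier_length[OF this(2)]
    word_space_carrier_length[OF this(3)]
  then show ultra: "word_dist u (word_of x) (word_of z) \<le>
      max (word_dist u (word_of x) (word_of y)) (word_dist u (word_of y) (word_of z))"
    by (rule word_dist_ultra[OF u])
  show "word_dist u (word_of x) (word_of z) \<le>
      word_dist u (word_of x) (word_of y) + word_dist u (word_of y) (word_of z)"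
    using ultra word_dist_nonneg[OF u xyz(1,2)] word_dist_nonneg[OF u xyz(2,3)] by linarith
qed

lemma word_space_linear_order:
  "strict_linear_order_on (carrier (word_space n u L)) (less (word_space n u L))"
  unfolding strict_linear_order_on_def word_space_simps(3)
proof (intro conjI ballI impI)
  fix x y z
  assume "x \<in> carrier (word_space n u L)" "y \<in> carrier (word_space n u L)"
    "z \<in> carrier (word_space n u L)"
    "word_less (word_of x) (word_of y) \<and> word_less (word_of y) (word_of z)"
  then show "word_less (word_of x) (word_of z)"
    using word_less_trans[of "word_of x" n "word_of y" "word_of z"] word_space_carrier_length
    by blast
next
  fix x y
  assume xy: "x \<in> carrier (word_space n u L)" "y \<in> carrier (word_space n u L)" "x \<noteq> y"
  then have "word_of x \<noteq> word_of y" using inj_onD[OF inj_on_word_of] by blast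
  then show "word_less (word_of x) (word_of y) \<or> word_less (word_of y) (word_of x)"
    using word_space_carrier_length[OF xy(1)] word_space_carrier_length[OF xy(2)]
    by (intro word_less_linear) simp_all
qed (simp add: word_less_def)

lemma word_space_cball_convex:
  assumes u: "decreasing_scale n u" and c: "c \<in> carrier (word_space n u L)"
  shows "convex_in (word_space n u L) (cball_in (word_space n u L) c r)"
  unfolding convex_in_def cball_in_def
proof (intro ballI impI, clarify)
  let ?M = "word_space n u L"
  fix x y z
  assume "x \<in> carrier ?M" "dist ?M c x \<le> r" "y \<in> carrier ?M" "dist ?M c y \<le> r"
    "z \<in> carrier ?M" "less ?M x z" "less ?M z y"
  then have l: "length (word_of c) = n" "length (word_of x) = n" "length (word_of y) = n"
      "length (word_of z) = n"
    and b: "word_dist u (word_of c) (word_of x) \<le> r" "word_dist u (word_of c) (word_of y) \<le> r"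
    and o: "word_less (word_of x) (word_of z)" "word_less (word_of z) (word_of y)"
    using c word_space_carrier_length by (auto simp: word_space_simps)
  have "word_dist u (word_of x) (word_of z) \<le> word_dist u (word_of x) (word_of y)"
    using word_dist_between[OF u l(2,3,4) o] .
  also have "\<dots> \<le> r"
    using word_dist_ultra[OF u l(2,1,3)] b by (simp add: word_dist_commute)
  finally show "dist ?M c z \<le> r"
    using word_dist_ultra[OF u l(1,2,4)] b by (simp add: word_space_simps)
qed

lemma word_space_fcous: "decreasing_scale n u \<Longrightarrow> fcous (word_space n u L)"
  unfolding fcous_def
  using finite_words word_space_ultrametric word_space_linear_order word_space_cball_convex
  by (auto simp: word_space_simps)

lemma word_space_spec: "spec (word_space n u L) \<subseteq> insert 0 (u ` {..<n})"
proof
  fix d assume "d \<in> spec (word_space n u L)"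
  then obtain x y where "x \<in> words n L" "y \<in> words n L" "d = word_dist u x y"
    by (auto simp: spec_def word_space_simps)
  then show "d \<in> insert 0 (u ` {..<n})"
    using first_diffD(1)[of x y] by (auto simp: word_dist_def words_def)
qed

section \<open>Coding spaces by words\<close>

definition word_coding :: "'a ous \<Rightarrow> nat \<Rightarrow> (nat \<Rightarrow> real) \<Rightarrow> nat \<Rightarrow> ('a \<Rightarrow> nat list) \<Rightarrow> bool" where
  "word_coding M n u L c \<longleftrightarrow> (\<forall>x\<in>carrier M. c x \<in> words n L) \<and>
     (\<forall>x\<in>carrier M. \<forall>y\<in>carrier M.
        word_dist u (c x) (c y) = dist M x y \<and> (less M x y \<longleftrightarrow> word_less (c x) (c y)))"

lemma word_coding_hom:
  assumes "ultrametric_on (carrier M) (dist M)" "word_coding M n u L c"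
  shows "(\<lambda>x\<in>carrier M. to_nat (c x)) \<in> hom M (word_space n u L)"
proof -
  have "inj_on c (carrier M)"
  proof (rule inj_onI)
    fix x y assume "x \<in> carrier M" "y \<in> carrier M" "c x = c y"
    moreover from this have "dist M x y = 0" using assms(2) by (metis word_coding_def word_dist_def)
    ultimately show "x = y" using assms(1) unfolding ultrametric_on_def by blast
  qed
  then have "inj_on (\<lambda>x. to_nat (c x)) (carrier M)" by (simp add: inj_on_def)
  then show ?thesis using assms(2)
    unfolding hom_def word_coding_def by (auto simp: word_space_simps inj_on_def)
qed

lemma word_coding_relabel:
  assumes c: "word_coding M n u L c" and \<phi>: "strict_mono_on \<Lambda> \<phi>"
    and letters: "\<And>x. x \<in> carrier M \<Longrightarrow> set (c x) \<subseteq> \<Lambda>" and "\<phi> ` \<Lambda> \<subseteq> {..<L'}"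
  shows "word_coding M n u L' (\<lambda>x. map \<phi> (c x))"
  unfolding word_coding_def
proof (rule conjI; intro ballI)
  fix x assume "x \<in> carrier M"
  then show "map \<phi> (c x) \<in> words n L'" using assms unfolding word_coding_def words_def by auto
next
  fix x y assume x: "x \<in> carrier M" and y: "y \<in> carrier M"
  have inj: "inj_on \<phi> (set (c x) \<union> set (c y))"
    using \<phi> letters x y strict_mono_on_imp_inj_on inj_on_subset by (metis Un_subset_iff)
  have len: "length (c x) = length (c y)" using c x y by (auto simp: word_coding_def words_def)
  have cxy: "word_dist u (c x) (c y) = dist M x y" "less M x y \<longleftrightarrow> word_less (c x) (c y)"
    using c x y unfolding word_coding_def by auto
  show "word_dist u (map \<phi> (c x)) (map \<phi> (c y)) = dist M x y \<and>
      (less M x y \<longleftrightarrow> word_less (map \<phi> (c x)) (map \<phi> (c y)))"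
  proof (cases "c x = c y")
    case True
    then show ?thesis using cxy by (simp add: word_dist_def word_less_def)
  next
    case False
    let ?k = "first_diff (c x) (c y)"
    have k: "?k < length (c x)" using first_diffD(1)[OF len False] .
    then have "c x ! ?k \<in> \<Lambda>" "c y ! ?k \<in> \<Lambda>" using letters x y len by (metis nth_mem subsetD)+
    then have "c x ! ?k < c y ! ?k \<longleftrightarrow> \<phi> (c x ! ?k) < \<phi> (c y ! ?k)"
      using \<phi> by (metis strict_mono_on_less)
    then show ?thesis
      using cxy first_diff_map[OF len False inj] k len False by (simp add: word_dist_def word_less_def)
  qed
qed

lemma homD:
  assumes "g \<in> hom A B" "x \<in> carrier A" "y \<in> carrier A"
  shows "g x \<in> carrier B" "dist B (g x) (g y) = dist A x y" "less B (g x) (g y) \<longleftrightarrow> less A x y"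
  using assms unfolding hom_def by auto

lemma compose_hom:
  assumes "g \<in> hom A B" "w \<in> hom B C"
  shows "compose (carrier A) w g \<in> hom A C"
proof -
  have "compose (carrier A) w g \<in> carrier A \<rightarrow>\<^sub>E carrier C"
    using assms unfolding hom_def by (auto simp: compose_def PiE_iff)
  moreover have "inj_on (compose (carrier A) w g) (carrier A)"
    using assms unfolding hom_def by (auto simp: inj_on_def compose_def PiE_iff)
  ultimately show ?thesis
    using assms homD[OF assms(1)] homD[OF assms(2)] unfolding hom_def by (simp add: compose_def)
qed

section \<open>Canonical words\<close>

definition rank :: "'a ous \<Rightarrow> 'a \<Rightarrow> nat" where
  "rank M x = card {y \<in> carrier M. less M y x}"

definition open_ball :: "'a ous \<Rightarrow> 'a \<Rightarrow> real \<Rightarrow> 'a set" where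
  "open_ball M x r = {y \<in> carrier M. dist M x y < r}"

definition ball_rank :: "'a ous \<Rightarrow> 'a \<Rightarrow> real \<Rightarrow> nat" where
  "ball_rank M x r = Min (rank M ` open_ball M x r)"

text \<open>The letter at position \<open>s\<close> encodes the pair (rank of the leftmost point of the open ball of
  radius \<open>u s\<close>, \<open>s\<close>); the position is recoverable as the letter \<open>mod n\<close>.\<close>
definition canonical_word :: "'a ous \<Rightarrow> nat \<Rightarrow> (nat \<Rightarrow> real) \<Rightarrow> 'a \<Rightarrow> nat list" where
  "canonical_word M n u x = map (\<lambda>s. ball_rank M x (u s) * n + s) [0..<n]"

lemma mult_add_less_mult_add_iff:
  fixes F F' s s' n :: nat
  assumes "s < n" "s' < n"
  shows "F * n + s < F' * n + s' \<longleftrightarrow> F < F' \<or> F = F' \<and> s < s'"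
proof -
  have less: "G * n + t < G' * n + t'" if "G < G'" "t < n" for G G' t t' :: nat
  proof -
    have "G * n + t < Suc G * n" using that by simp
    also have "\<dots> \<le> G' * n" using that by (intro mult_le_mono1) simp
    finally show ?thesis by simp
  qed
  show ?thesis using less[of F F' s s'] less[of F' F s' s] assms by (cases F F' rule: linorder_cases) auto
qed

locale fcous_space =
  fixes M :: "'a ous"
  assumes fcous: "fcous M"
begin

lemma finite_carrier: "finite (carrier M)"
  using fcous by (simp add: fcous_def)

lemma dist_self: "x \<in> carrier M \<Longrightarrow> dist M x x = 0"
  and dist_nonneg: "x \<in> carrier M \<Longrightarrow> y \<in> carrier M \<Longrightarrow> 0 \<le> dist M x y"
  and dist_eq_0_iff: "x \<in> carrier M \<Longrightarrow> y \<in> carrier M \<Longrightarrow> dist M x y = 0 \<longleftrightarrow> x = y"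
  and dist_commute: "x \<in> carrier M \<Longrightarrow> y \<in> carrier M \<Longrightarrow> dist M x y = dist M y x"
  and dist_ultra: "x \<in> carrier M \<Longrightarrow> y \<in> carrier M \<Longrightarrow> z \<in> carrier M \<Longrightarrow>
      dist M x z \<le> max (dist M x y) (dist M y z)"
  using fcous by (simp_all add: fcous_def ultrametric_on_def)

lemma less_irrefl: "x \<in> carrier M \<Longrightarrow> \<not> less M x x"
  and less_trans: "x \<in> carrier M \<Longrightarrow> y \<in> carrier M \<Longrightarrow> z \<in> carrier M \<Longrightarrow>
      less M x y \<Longrightarrow> less M y z \<Longrightarrow> less M x z"
  and less_linear: "x \<in> carrier M \<Longrightarrow> y \<in> carrier M \<Longrightarrow> x \<noteq> y \<Longrightarrow> less M x y \<or> less M y x"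
  using fcous unfolding fcous_def strict_linear_order_on_def by blast+

lemma less_asym: "x \<in> carrier M \<Longrightarrow> y \<in> carrier M \<Longrightarrow> less M x y \<Longrightarrow> \<not> less M y x"
  using less_irrefl less_trans by blast

lemma rank_less:
  assumes "x \<in> carrier M" "y \<in> carrier M" "less M x y" shows "rank M x < rank M y"
proof -
  have "{z \<in> carrier M. less M z x} \<subset> {z \<in> carrier M. less M z y}"
    using assms less_trans less_irrefl by blast
  then show ?thesis unfolding rank_def using finite_carrier by (intro psubset_card_mono) auto
qed

lemma rank_less_iff:
  assumes "x \<in> carrier M" "y \<in> carrier M" shows "rank M x < rank M y \<longleftrightarrow> less M x y"
proof
  assume "rank M x < rank M y"
  then have "x \<noteq> y" "\<not> less M y x" using rank_less[of y x] assms by auto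
  then show "less M x y" using less_linear assms by blast
qed (rule rank_less[OF assms])

lemma inj_on_rank: "inj_on (rank M) (carrier M)"
proof (rule inj_onI, rule ccontr)
  fix x y assume "x \<in> carrier M" "y \<in> carrier M" "rank M x = rank M y" "x \<noteq> y"
  then show False using less_linear rank_less by fastforce
qed

lemma rank_less_card: "x \<in> carrier M \<Longrightarrow> rank M x < card (carrier M)"
  unfolding rank_def using finite_carrier less_irrefl by (intro psubset_card_mono) auto

text \<open>The open ball of radius \<open>t\<close> around \<open>z\<close> is the closed ball of the largest distance
  from \<open>z\<close> below \<open>t\<close>, which is convex.\<close>
lemma dist_less_between:
  assumes "x \<in> carrier M" "y \<in> carrier M" "z \<in> carrier M" "less M y x" "less M x z"
    and "dist M z y < t"
  shows "dist M z x < t"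
proof -
  define D where "D = {dist M z w | w. w \<in> carrier M \<and> dist M z w < t}"
  have "finite D" "dist M z y \<in> D" using finite_carrier assms unfolding D_def by auto
  then have "Max D \<in> D" "dist M z y \<le> Max D" using Max_in by auto
  then have "Max D < t" "dist M z y \<le> Max D" "dist M z z \<le> Max D"
    using dist_self dist_nonneg assms unfolding D_def by auto
  moreover have "convex_in M (cball_in M z (Max D))" using fcous assms by (simp add: fcous_def)
  ultimately have "x \<in> cball_in M z (Max D)" "Max D < t"
    using assms unfolding convex_in_def cball_in_def by blast+
  then show ?thesis unfolding cball_in_def by auto
qed

lemma center_in_open_ball: "x \<in> carrier M \<Longrightarrow> 0 < r \<Longrightarrow> x \<in> open_ball M x r"
  using dist_self unfolding open_ball_def by auto

lemma ball_rank_attained: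
  assumes "x \<in> carrier M" "0 < r"
  obtains a where "a \<in> open_ball M x r" "rank M a = ball_rank M x r"
proof -
  have "ball_rank M x r \<in> rank M ` open_ball M x r"
    unfolding ball_rank_def using center_in_open_ball[OF assms] finite_carrier
    by (intro Min_in) (auto simp: open_ball_def)
  then show ?thesis using that by auto
qed

lemma ball_rank_le_rank: "x \<in> carrier M \<Longrightarrow> 0 < r \<Longrightarrow> ball_rank M x r \<le> rank M x"
  unfolding ball_rank_def using center_in_open_ball finite_carrier
  by (intro Min_le) (auto simp: open_ball_def)

lemma open_ball_eq:
  assumes "x \<in> carrier M" "y \<in> carrier M" "dist M x y < r"
  shows "open_ball M x r = open_ball M y r"
  unfolding open_ball_def using assms dist_ultra dist_commute by (auto, (smt (verit))+)

lemma ball_rank_eq: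
  "x \<in> carrier M \<Longrightarrow> y \<in> carrier M \<Longrightarrow> dist M x y < r \<Longrightarrow> ball_rank M x r = ball_rank M y r"
  unfolding ball_rank_def using open_ball_eq by simp

lemma ball_rank_antimono:
  assumes "x \<in> carrier M" "0 < r'" "r' \<le> r"
  shows "ball_rank M x r \<le> ball_rank M x r'"
proof -
  have "open_ball M x r' \<subseteq> open_ball M x r" using assms unfolding open_ball_def by auto
  then show ?thesis unfolding ball_rank_def using center_in_open_ball[OF assms(1,2)] finite_carrier
    by (intro Min_antimono) (auto simp: open_ball_def)
qed

lemma rank_less_ball_rank:
  assumes "x \<in> carrier M" "y \<in> carrier M" "less M x y" "\<not> dist M y x < r" "0 < r"
  shows "rank M x < ball_rank M y r"
proof (rule ccontr)
  obtain a where a: "a \<in> carrier M" "dist M y a < r" "rank M a = ball_rank M y r"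
    using ball_rank_attained[OF assms(2,5)] unfolding open_ball_def by blast
  assume "\<not> ?thesis"
  moreover have "rank M a \<noteq> rank M x" using a assms inj_on_rank by (auto dest: inj_onD)
  ultimately have "rank M a < rank M x" using a by simp
  then have "less M a x" using a assms rank_less_iff by blast
  then show False using dist_less_between[OF assms(1) a(1) assms(2) _ assms(3) a(2)] assms by blast
qed

lemma canonical_word_in_words:
  assumes u: "decreasing_scale n u" and x: "x \<in> carrier M"
  shows "canonical_word M n u x \<in> words n (card (carrier M) * n)"
proof -
  have "ball_rank M x (u s) * n + s < card (carrier M) * n" if s: "s < n" for s
  proof -
    have "ball_rank M x (u s) < card (carrier M)"
      using ball_rank_le_rank[OF x] rank_less_card[OF x] u s unfolding decreasing_scale_def
      by (meson le_less_trans)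
    then show ?thesis using mult_add_less_mult_add_iff[OF s, of 0] s by simp
  qed
  then show ?thesis unfolding words_def canonical_word_def by auto
qed

lemma canonical_word_coding:
  assumes u: "decreasing_scale n u" and spec: "spec M \<subseteq> insert 0 (u ` {..<n})"
  shows "word_coding M n u (card (carrier M) * n) (canonical_word M n u)"
  unfolding word_coding_def
proof (rule conjI; intro ballI)
  fix x assume "x \<in> carrier M"
  then show "canonical_word M n u x \<in> words n (card (carrier M) * n)"
    by (rule canonical_word_in_words[OF u])
next
  fix x y assume x: "x \<in> carrier M" and y: "y \<in> carrier M"
  let ?cx = "canonical_word M n u x" and ?cy = "canonical_word M n u y"
  have nth: "\<And>z s. s < n \<Longrightarrow> canonical_word M n u z ! s = ball_rank M z (u s) * n + s"
    by (simp add: canonical_word_def)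
  show "word_dist u ?cx ?cy = dist M x y \<and> (less M x y \<longleftrightarrow> word_less ?cx ?cy)"
  proof (cases "x = y")
    case True
    then show ?thesis using dist_self x less_irrefl by (simp add: word_dist_def word_less_def)
  next
    case False
    have "dist M x y \<in> spec M" "dist M x y \<noteq> 0"
      using x y False dist_eq_0_iff unfolding spec_def by auto
    then obtain j where j: "j < n" "dist M x y = u j" using spec by auto
    have u_pos: "\<And>s. s < n \<Longrightarrow> 0 < u s" using u by (simp add: decreasing_scale_def)
    have below: "?cx ! i = ?cy ! i" if "i < j" for i
      using that j u ball_rank_eq[OF x y] by (simp add: nth decreasing_scale_def)
    have lt: "?cx ! j < ?cy ! j" if "less M x y"
      using that ball_rank_le_rank[OF x, of "u j"] rank_less_ball_rank[OF x y, of "u j"] j u_pos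
        dist_commute[OF x y]
      by (simp add: nth)
    have gt: "?cy ! j < ?cx ! j" if "less M y x"
      using that ball_rank_le_rank[OF y, of "u j"] rank_less_ball_rank[OF y x, of "u j"] j u_pos
        dist_commute[OF x y]
      by (simp add: nth)
    have ne: "?cx ! j \<noteq> ?cy ! j" using lt gt less_linear[OF x y False] by fastforce
    then have "first_diff ?cx ?cy = j" "?cx \<noteq> ?cy"
      using below j by (auto intro!: first_diff_eqI simp: canonical_word_def)
    then show ?thesis using j lt gt less_asym[OF x y] less_linear[OF x y False]
      by (auto simp: word_dist_def word_less_def)
  qed
qed

lemma relabelled_canonical_word_hom:
  assumes u: "decreasing_scale n u" and spec: "spec M \<subseteq> insert 0 (u ` {..<n})"
    and \<phi>: "strict_mono_on {..<card (carrier M) * n} \<phi>" "\<phi> ` {..<card (carrier M) * n} \<subseteq> {..<N}"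
  shows "(\<lambda>x\<in>carrier M. to_nat (map \<phi> (canonical_word M n u x))) \<in> hom M (word_space n u N)"
proof (rule word_coding_hom[OF _ word_coding_relabel[OF canonical_word_coding[OF u spec] \<phi>(1)]])
  show "ultrametric_on (carrier M) (dist M)" using fcous by (simp add: fcous_def)
  show "set (canonical_word M n u x) \<subseteq> {..<card (carrier M) * n}" if "x \<in> carrier M" for x
    using canonical_word_in_words[OF u that] by (auto simp: words_def)
qed (fact \<phi>(2))

end

section \<open>Increasing relabellings of finite sets\<close>

lemma strict_mono_on_nth_sorted_list_of_set:
  "strict_mono_on {..<card H} (\<lambda>i. sorted_list_of_set H ! i)"
  by (rule strict_mono_onI) (simp add: sorted_wrt_nth_less[OF strict_sorted_list_of_set])

lemma nth_sorted_list_of_set_card_less: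
  fixes X :: "'a::linorder set"
  assumes "finite X" "y \<in> X"
  shows "sorted_list_of_set X ! card {x\<in>X. x < y} = y"
proof -
  define xs where "xs = sorted_list_of_set X"
  have sorted: "sorted_wrt (<) xs" unfolding xs_def by (rule strict_sorted_list_of_set)
  have set: "set xs = X" and "distinct xs" unfolding xs_def using assms by simp_all
  obtain i where i: "i < length xs" "xs ! i = y" using assms set by (metis in_set_conv_nth)
  have less_iff: "xs ! j < y \<longleftrightarrow> j < i" if j: "j < length xs" for j
  proof
    assume "xs ! j < y"
    show "j < i"
    proof (rule ccontr)
      assume "\<not> j < i"
      then have "xs ! i \<le> xs ! j" using sorted_wrt_nth_less[OF sorted, of i j] j i by (cases "i = j") auto
      then show False using \<open>xs ! j < y\<close> i by simp
    qed
  qed (use sorted_wrt_nth_less[OF sorted, of j i] i in simp)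
  have "{x\<in>X. x < y} = (\<lambda>j. xs ! j) ` {..<i}"
  proof (intro equalityI subsetI)
    fix x assume "x \<in> {x\<in>X. x < y}"
    then obtain j where "j < length xs" "x = xs ! j" "x < y" using set by (auto simp: in_set_conv_nth)
    then show "x \<in> (\<lambda>j. xs ! j) ` {..<i}" using less_iff by auto
  next
    fix x assume "x \<in> (\<lambda>j. xs ! j) ` {..<i}"
    then obtain j where "j < i" "x = xs ! j" by auto
    then show "x \<in> {x\<in>X. x < y}" using less_iff[of j] i set by auto
  qed
  moreover have "inj_on (\<lambda>j. xs ! j) {..<i}"
    using \<open>distinct xs\<close> i by (auto simp: inj_on_def nth_eq_iff_index_eq)
  ultimately show ?thesis using i unfolding xs_def by (simp add: card_image)
qed

definition rank_transfer :: "'a::linorder set \<Rightarrow> 'b::linorder set \<Rightarrow> 'a \<Rightarrow> 'b" where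
  "rank_transfer \<Lambda> X l = sorted_list_of_set X ! card {l'\<in>\<Lambda>. l' < l}"

lemma rank_transfer_image:
  assumes "finite \<Lambda>" "strict_mono_on \<Lambda> \<gamma>" "l \<in> \<Lambda>"
  shows "rank_transfer \<Lambda> (\<gamma> ` \<Lambda>) l = \<gamma> l"
proof -
  note less_iff = strict_mono_on_less[OF assms(2) _ assms(3)]
  have "{x \<in> \<gamma> ` \<Lambda>. x < \<gamma> l} = \<gamma> ` {l'\<in>\<Lambda>. l' < l}"
  proof (intro equalityI subsetI)
    fix x assume "x \<in> {x \<in> \<gamma> ` \<Lambda>. x < \<gamma> l}"
    then obtain l' where "l' \<in> \<Lambda>" "x = \<gamma> l'" "\<gamma> l' < \<gamma> l" by auto
    then show "x \<in> \<gamma> ` {l'\<in>\<Lambda>. l' < l}" using less_iff by auto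
  qed (use less_iff in auto)
  moreover have "inj_on \<gamma> {l'\<in>\<Lambda>. l' < l}"
    by (rule inj_on_subset[OF strict_mono_on_imp_inj_on[OF assms(2)]]) auto
  ultimately have "card {l'\<in>\<Lambda>. l' < l} = card {x \<in> \<gamma> ` \<Lambda>. x < \<gamma> l}" by (simp add: card_image)
  then show ?thesis
    unfolding rank_transfer_def using nth_sorted_list_of_set_card_less[of "\<gamma> ` \<Lambda>" "\<gamma> l"] assms
    by simp
qed

definition canonical_letters :: "'a ous \<Rightarrow> nat \<Rightarrow> (nat \<Rightarrow> real) \<Rightarrow> nat set" where
  "canonical_letters A n u = (\<Union>a\<in>carrier A. set (canonical_word A n u a))"

text \<open>The letter \<open>F * n + s\<close> of \<open>A\<close> names the open ball of radius \<open>u s\<close> whose leftmost point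
  has rank \<open>F\<close>; it is sent to the letter naming the ball of the same radius around the image
  of that point.\<close>
definition letter_transfer ::
    "'a ous \<Rightarrow> 'b ous \<Rightarrow> nat \<Rightarrow> (nat \<Rightarrow> real) \<Rightarrow> ('a \<Rightarrow> 'b) \<Rightarrow> nat \<Rightarrow> nat" where
  "letter_transfer A B n u g l =
     ball_rank B (g (inv_into (carrier A) (rank A) (l div n))) (u (l mod n)) * n + l mod n"

locale fcous_embedding = A: fcous_space A + B: fcous_space B
  for A :: "'a ous" and B :: "'b ous" +
  fixes n :: nat and u :: "nat \<Rightarrow> real" and g :: "'a \<Rightarrow> 'b"
  assumes scale: "decreasing_scale n u" and hom: "g \<in> hom A B"
begin

lemma scale_pos: "s < n \<Longrightarrow> 0 < u s"
  using scale by (simp add: decreasing_scale_def)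

lemma leftmost_point:
  assumes "a \<in> carrier A" "s < n"
  defines "p \<equiv> inv_into (carrier A) (rank A) (ball_rank A a (u s))"
  shows "p \<in> carrier A" "dist A a p < u s" "rank A p = ball_rank A a (u s)"
proof -
  obtain a' where "a' \<in> open_ball A a (u s)" "rank A a' = ball_rank A a (u s)"
    using A.ball_rank_attained[OF assms(1) scale_pos[OF assms(2)]] .
  moreover from this have "p = a'"
    unfolding p_def using inv_into_f_f[OF A.inj_on_rank, of a'] by (simp add: open_ball_def)
  ultimately show "p \<in> carrier A" "dist A a p < u s" "rank A p = ball_rank A a (u s)"
    by (auto simp: open_ball_def)
qed

lemma letter_transfer_letter:
  assumes "s < n"
  shows "letter_transfer A B n u g (F * n + s) =
    ball_rank B (g (inv_into (carrier A) (rank A) F)) (u s) * n + s"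
  using assms by (simp add: letter_transfer_def)

lemma canonical_word_image:
  assumes a: "a \<in> carrier A"
  shows "canonical_word B n u (g a) = map (letter_transfer A B n u g) (canonical_word A n u a)"
proof (rule nth_equalityI)
  fix s assume "s < length (canonical_word B n u (g a))"
  then have s: "s < n" by (simp add: canonical_word_def)
  note p = leftmost_point[OF a s]
  have "ball_rank B (g a) (u s) = ball_rank B (g (inv_into (carrier A) (rank A) (ball_rank A a (u s)))) (u s)"
    using B.ball_rank_eq homD[OF hom] a p by simp
  then show "canonical_word B n u (g a) ! s = map (letter_transfer A B n u g) (canonical_word A n u a) ! s"
    using s by (simp add: canonical_word_def letter_transfer_letter)
qed (simp add: canonical_word_def)

lemma strict_mono_letter_transfer:
  "strict_mono_on (canonical_letters A n u) (letter_transfer A B n u g)"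
proof (rule strict_mono_onI)
  fix l1 l2 assume "l1 \<in> canonical_letters A n u" "l2 \<in> canonical_letters A n u" and "l1 < l2"
  then obtain a1 s1 a2 s2 where a: "a1 \<in> carrier A" "s1 < n" "a2 \<in> carrier A" "s2 < n"
    and l: "l1 = ball_rank A a1 (u s1) * n + s1" "l2 = ball_rank A a2 (u s2) * n + s2"
    unfolding canonical_letters_def canonical_word_def by auto
  define p1 where "p1 = inv_into (carrier A) (rank A) (ball_rank A a1 (u s1))"
  define p2 where "p2 = inv_into (carrier A) (rank A) (ball_rank A a2 (u s2))"
  note p1 = leftmost_point[OF a(1,2), folded p1_def]
  note p2 = leftmost_point[OF a(3,4), folded p2_def]
  have lt: "letter_transfer A B n u g l1 = ball_rank B (g p1) (u s1) * n + s1"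
    "letter_transfer A B n u g l2 = ball_rank B (g p2) (u s2) * n + s2"
    using a l by (simp_all add: letter_transfer_letter p1_def p2_def)
  consider "rank A p1 = rank A p2" "s1 < s2" | "rank A p1 < rank A p2"
    using \<open>l1 < l2\<close> l p1 p2 mult_add_less_mult_add_iff[OF a(2,4)] by auto
  then show "letter_transfer A B n u g l1 < letter_transfer A B n u g l2"
  proof cases
    case 1
    then have "p1 = p2" using inj_onD[OF A.inj_on_rank _ p1(1) p2(1)] by blast
    then have "ball_rank B (g p1) (u s1) \<le> ball_rank B (g p2) (u s2)"
      using B.ball_rank_antimono homD(1)[OF hom p2(1) p2(1)] scale_pos[OF a(4)]
        decreasing_scale_antimono[OF scale less_imp_le[OF \<open>s1 < s2\<close>] a(4)] by simp
    then show ?thesis using lt \<open>s1 < s2\<close> a mult_add_less_mult_add_iff by auto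
  next
    case 2
    then have "less A p1 p2" using A.rank_less_iff p1 p2 by blast
    have "\<not> dist A p2 p1 < u s2"
    proof
      assume "dist A p2 p1 < u s2"
      then have "ball_rank A p2 (u s2) \<le> rank A p1"
        using A.ball_rank_le_rank[OF p1(1) scale_pos[OF a(4)]] A.ball_rank_eq[OF p2(1) p1(1)] by simp
      moreover have "ball_rank A p2 (u s2) = rank A p2"
        using A.ball_rank_eq[OF a(3) p2(1,2)] p2(3) by simp
      ultimately show False using 2 by simp
    qed
    then have "rank B (g p1) < ball_rank B (g p2) (u s2)"
      using B.rank_less_ball_rank homD[OF hom] p1(1) p2(1) \<open>less A p1 p2\<close> scale_pos[OF a(4)] by simp
    moreover have "ball_rank B (g p1) (u s1) \<le> rank B (g p1)"
      using B.ball_rank_le_rank homD(1)[OF hom p1(1) p1(1)] scale_pos[OF a(2)] by simp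
    ultimately show ?thesis using lt a mult_add_less_mult_add_iff by simp
  qed
qed


lemma letter_transfer_bounded:
  "letter_transfer A B n u g ` canonical_letters A n u \<subseteq> {..<card (carrier B) * n}"
proof clarify
  fix l assume "l \<in> canonical_letters A n u"
  then obtain a where a: "a \<in> carrier A" "l \<in> set (canonical_word A n u a)"
    unfolding canonical_letters_def by blast
  then have "letter_transfer A B n u g l \<in> set (canonical_word B n u (g a))"
    using canonical_word_image by simp
  then show "letter_transfer A B n u g l < card (carrier B) * n"
    using B.canonical_word_in_words[OF scale homD(1)[OF hom a(1) a(1)]] by (auto simp: words_def)
qed

lemma compose_relabelled_canonical_word:
  fixes \<phi> :: "nat \<Rightarrow> nat"
  assumes "strict_mono_on {..<card (carrier B) * n} \<phi>"
  defines "\<Lambda> \<equiv> canonical_letters A n u" and "\<gamma> \<equiv> \<phi> \<circ> letter_transfer A B n u g"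
  shows "strict_mono_on \<Lambda> \<gamma>"
    and "compose (carrier A) (\<lambda>b\<in>carrier B. to_nat (map \<phi> (canonical_word B n u b))) g =
      (\<lambda>a\<in>carrier A. to_nat (map (rank_transfer \<Lambda> (\<gamma> ` \<Lambda>)) (canonical_word A n u a)))"
proof -
  show mono: "strict_mono_on \<Lambda> \<gamma>"
    unfolding \<gamma>_def \<Lambda>_def
    using monotone_on_o[OF assms(1) strict_mono_letter_transfer letter_transfer_bounded] .
  have "finite \<Lambda>" unfolding \<Lambda>_def canonical_letters_def using A.finite_carrier by blast
  then have "map (rank_transfer \<Lambda> (\<gamma> ` \<Lambda>)) (canonical_word A n u a) = map \<gamma> (canonical_word A n u a)"
    if "a \<in> carrier A" for a
    using rank_transfer_image[OF _ mono] that by (auto simp: \<Lambda>_def canonical_letters_def)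
  then show "compose (carrier A) (\<lambda>b\<in>carrier B. to_nat (map \<phi> (canonical_word B n u b))) g =
      (\<lambda>a\<in>carrier A. to_nat (map (rank_transfer \<Lambda> (\<gamma> ` \<Lambda>)) (canonical_word A n u a)))"
    using homD(1)[OF hom] canonical_word_image by (auto simp: compose_def \<gamma>_def)
qed
end

section \<open>The Ramsey property\<close>

lemma covering_colouring:
  assumes "(\<Union>i\<in>{1..k}. \<Sigma> i) = X" "0 < k"
  obtains \<chi> :: "'a \<Rightarrow> nat" where "\<And>f. \<chi> f < k" "\<And>f. f \<in> X \<Longrightarrow> f \<in> \<Sigma> (Suc (\<chi> f))"
proof
  define \<chi> where "\<chi> f = (if \<exists>i<k. f \<in> \<Sigma> (Suc i) then LEAST i. f \<in> \<Sigma> (Suc i) else 0)" for f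
  have cover: "\<exists>i<k. f \<in> \<Sigma> (Suc i)" if "f \<in> X" for f
  proof -
    from that assms(1) obtain j where "j \<in> {1..k}" "f \<in> \<Sigma> j" by blast
    then show ?thesis by (intro exI[of _ "j - 1"]) auto
  qed
  show "\<chi> f < k" for f
  proof (cases "\<exists>i<k. f \<in> \<Sigma> (Suc i)")
    case True
    then obtain i where "i < k" "f \<in> \<Sigma> (Suc i)" by blast
    then show ?thesis using Least_le[of "\<lambda>i. f \<in> \<Sigma> (Suc i)" i] True by (simp add: \<chi>_def)
  qed (use assms(2) in \<open>auto simp: \<chi>_def\<close>)
  show "f \<in> \<Sigma> (Suc (\<chi> f))" if "f \<in> X" for f
    using cover[OF that] LeastI_ex[of "\<lambda>i. f \<in> \<Sigma> (Suc i)"] by (auto simp: \<chi>_def)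
qed

lemma ramsey_propertyI:
  assumes "\<And>(k::nat) A B. A \<in> Ob \<Longrightarrow> B \<in> Ob \<Longrightarrow> \<exists>C\<in>Ob. \<forall>\<chi> :: ('a \<Rightarrow> 'a) \<Rightarrow> nat. (\<forall>f. \<chi> f < k) \<longrightarrow>
     (\<exists>i. \<exists>w\<in>hom B C. \<forall>g\<in>hom A B. \<chi> (compose (carrier A) w g) = i)"
  shows "ramsey_property Ob"
  unfolding ramsey_property_def
proof (intro allI impI ballI)
  fix k :: nat and A B assume "2 \<le> k" "A \<in> Ob" "B \<in> Ob" "hom A B \<noteq> {}"
  then obtain C where C: "C \<in> Ob" and colouring: "\<forall>\<chi> :: ('a \<Rightarrow> 'a) \<Rightarrow> nat. (\<forall>f. \<chi> f < k) \<longrightarrow>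
     (\<exists>i. \<exists>w\<in>hom B C. \<forall>g\<in>hom A B. \<chi> (compose (carrier A) w g) = i)"
    using assms by blast
  obtain g0 where g0: "g0 \<in> hom A B" using \<open>hom A B \<noteq> {}\<close> by blast
  show "\<exists>C\<in>Ob. \<forall>\<Sigma>. (\<Union>i\<in>{1..k}. \<Sigma> i) = hom A C \<and>
      (\<forall>i\<in>{1..k}. \<forall>j\<in>{1..k}. i \<noteq> j \<longrightarrow> \<Sigma> i \<inter> \<Sigma> j = {}) \<longrightarrow>
      (\<exists>i\<in>{1..k}. \<exists>w\<in>hom B C. (\<lambda>f. compose (carrier A) w f) ` hom A B \<subseteq> \<Sigma> i)"
  proof (intro bexI[OF _ C] allI impI)
    fix \<Sigma> :: "nat \<Rightarrow> ('a \<Rightarrow> 'a) set"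
    assume "(\<Union>i\<in>{1..k}. \<Sigma> i) = hom A C \<and>
      (\<forall>i\<in>{1..k}. \<forall>j\<in>{1..k}. i \<noteq> j \<longrightarrow> \<Sigma> i \<inter> \<Sigma> j = {})"
    then have cover: "(\<Union>i\<in>{1..k}. \<Sigma> i) = hom A C" by blast
    obtain \<chi> :: "('a \<Rightarrow> 'a) \<Rightarrow> nat" where \<chi>_less: "\<And>f. \<chi> f < k"
      and \<chi>_class: "\<And>f. f \<in> hom A C \<Longrightarrow> f \<in> \<Sigma> (Suc (\<chi> f))"
      using covering_colouring[OF cover] \<open>2 \<le> k\<close> by auto
    obtain i w where w: "w \<in> hom B C" and mono: "\<forall>g\<in>hom A B. \<chi> (compose (carrier A) w g) = i"
      using spec[OF colouring, of \<chi>] \<chi>_less by blast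
    have "(\<lambda>f. compose (carrier A) w f) ` hom A B \<subseteq> \<Sigma> (Suc i)"
    proof clarify
      fix g assume "g \<in> hom A B"
      then show "compose (carrier A) w g \<in> \<Sigma> (Suc i)"
        using \<chi>_class[OF compose_hom[OF _ w]] mono by simp
    qed
    moreover have "Suc i \<in> {1..k}"
      using mono g0 \<chi>_less[of "compose (carrier A) w g0"] by (simp add: Suc_le_eq)
    ultimately show "\<exists>i\<in>{1..k}. \<exists>w\<in>hom B C. (\<lambda>f. compose (carrier A) w f) ` hom A B \<subseteq> \<Sigma> i"
      using w by blast
  qed
qed

text \<open>A set \<open>X\<close> of \<open>card \<Lambda>\<close> letters is coloured by the colour of the relabelling of \<open>A\<close> into
  \<open>X\<close>. A monochromatic set \<open>H\<close> of \<open>m\<close> letters receives the canonical words of \<open>B\<close>, and every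
  embedding of \<open>A\<close> into this copy of \<open>B\<close> is the relabelling of \<open>A\<close> into some subset of \<open>H\<close>.\<close>
lemma word_space_ramsey:
  fixes A :: "'a ous" and B :: "'b ous"
  assumes A: "fcous A" and B: "fcous B" and u: "decreasing_scale n u"
    and spec_B: "spec B \<subseteq> insert 0 (u ` {..<n})"
  shows "\<exists>N. \<forall>\<chi> :: ('a \<Rightarrow> nat) \<Rightarrow> nat. (\<forall>f. \<chi> f < k) \<longrightarrow>
    (\<exists>i. \<exists>w\<in>hom B (word_space n u N). \<forall>g\<in>hom A B. \<chi> (compose (carrier A) w g) = i)"
proof -
  interpret B: fcous_space B by (rule fcous_space.intro[OF B])
  define \<Lambda> where "\<Lambda> = canonical_letters A n u"
  define m where "m = card (carrier B) * n"
  obtain N :: nat where N: "partn_lst {..<N} (replicate k m) (card \<Lambda>)"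
    using ramsey_full[of "replicate k m" "card \<Lambda>"] by blast
  have "\<exists>i. \<exists>w\<in>hom B (word_space n u N). \<forall>g\<in>hom A B. \<chi> (compose (carrier A) w g) = i"
    if \<chi>: "\<forall>f. \<chi> f < k" for \<chi> :: "('a \<Rightarrow> nat) \<Rightarrow> nat"
  proof -
    define relabel where "relabel X =
      (\<lambda>a\<in>carrier A. to_nat (map (rank_transfer \<Lambda> X) (canonical_word A n u a)))" for X :: "nat set"
    have "(\<lambda>X. \<chi> (relabel X)) \<in> nsets {..<N} (card \<Lambda>) \<rightarrow> {..<length (replicate k m)}"
      using \<chi> by simp
    then obtain i H where H: "H \<in> nsets {..<N} m" "(\<lambda>X. \<chi> (relabel X)) ` nsets H (card \<Lambda>) \<subseteq> {i}"
      using N unfolding partn_lst_def monochromatic_def by fastforce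
    then have "finite H" "card H = m" "H \<subseteq> {..<N}" by (auto simp: nsets_def)
    define \<phi> where "\<phi> = (\<lambda>j. sorted_list_of_set H ! j)"
    have \<phi>_mono: "strict_mono_on {..<m} \<phi>"
      using strict_mono_on_nth_sorted_list_of_set[of H] \<open>card H = m\<close> by (simp add: \<phi>_def)
    have \<phi>_into: "\<phi> ` {..<m} \<subseteq> H"
      using nth_mem[of _ "sorted_list_of_set H"] \<open>finite H\<close> \<open>card H = m\<close> by (auto simp: \<phi>_def)
    define w where "w = (\<lambda>b\<in>carrier B. to_nat (map \<phi> (canonical_word B n u b)))"
    have "w \<in> hom B (word_space n u N)"
      unfolding w_def using B.relabelled_canonical_word_hom[OF u spec_B] \<phi>_mono \<phi>_into \<open>H \<subseteq> {..<N}\<close>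
      by (auto simp: m_def)
    moreover have "\<chi> (compose (carrier A) w g) = i" if g: "g \<in> hom A B" for g
    proof -
      interpret fcous_embedding A B n u g by (unfold_locales; fact A B u g)
      define \<gamma> where "\<gamma> = \<phi> \<circ> letter_transfer A B n u g"
      note relabelled = compose_relabelled_canonical_word[OF \<phi>_mono[unfolded m_def], folded \<Lambda>_def \<gamma>_def]
      have "\<gamma> ` \<Lambda> \<subseteq> H" using letter_transfer_bounded \<phi>_into by (auto simp: \<gamma>_def \<Lambda>_def m_def)
      moreover have "card (\<gamma> ` \<Lambda>) = card \<Lambda>"
        using strict_mono_on_imp_inj_on[OF relabelled(1)] by (rule card_image)
      ultimately have "\<gamma> ` \<Lambda> \<in> nsets H (card \<Lambda>)"
        using \<open>finite H\<close> by (auto simp: nsets_def intro: finite_subset)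
      then show ?thesis using H(2) relabelled(2) by (auto simp: w_def relabel_def)
    qed
    ultimately show ?thesis by blast
  qed
  then show ?thesis by blast
qed

lemma decreasing_scale_enumeration:
  assumes "finite T" "T \<subseteq> {0<..}"
  obtains n u where "decreasing_scale n u" "u ` {..<n} = T"
proof
  define xs where "xs = rev (sorted_list_of_set T)"
  have sorted: "sorted_wrt (>) xs"
    using strict_sorted_list_of_set[of T] by (simp add: xs_def sorted_wrt_rev)
  have "set xs = T" "length xs = card T" using assms(1) by (simp_all add: xs_def)
  moreover have "set xs = (\<lambda>s. xs ! s) ` {..<length xs}" by (auto simp: in_set_conv_nth)
  ultimately show image: "(\<lambda>s. xs ! s) ` {..<card T} = T" by simp
  have "\<And>i j. i < j \<Longrightarrow> j < card T \<Longrightarrow> xs ! j < xs ! i"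
    using sorted_wrt_nth_less[OF sorted] \<open>length xs = card T\<close> by simp
  moreover have "\<And>i. i < card T \<Longrightarrow> 0 < xs ! i" using image assms(2) by auto
  ultimately show "decreasing_scale (card T) (\<lambda>s. xs ! s)"
    unfolding decreasing_scale_def by blast
qed

lemma finite_spec: "fcous M \<Longrightarrow> finite (spec M)"
  unfolding spec_def fcous_def by (simp add: finite_image_set2)

lemma spec_nonneg: "fcous M \<Longrightarrow> d \<in> spec M \<Longrightarrow> 0 \<le> d"
  unfolding spec_def fcous_def ultrametric_on_def by auto

lemma zero_in_spec:
  assumes "fcous M" "x \<in> carrier M" shows "0 \<in> spec M"
proof -
  have "dist M x x \<in> spec M" using assms(2) unfolding spec_def by blast
  moreover have "dist M x x = 0" using assms by (simp add: fcous_def ultrametric_on_def)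
  ultimately show ?thesis by simp
qed

lemma ramsey_property_spec_subset:
  "ramsey_property {M :: nat ous. fcous M \<and> spec M \<subseteq> S}" (is "ramsey_property ?Ob")
proof (rule ramsey_propertyI)
  fix k :: nat and A B :: "nat ous"
  assume "A \<in> ?Ob" "B \<in> ?Ob"
  then have A: "fcous A" "spec A \<subseteq> S" and B: "fcous B" "spec B \<subseteq> S" by auto
  show "\<exists>C\<in>?Ob. \<forall>\<chi> :: (nat \<Rightarrow> nat) \<Rightarrow> nat. (\<forall>f. \<chi> f < k) \<longrightarrow>
    (\<exists>i. \<exists>w\<in>hom B C. \<forall>g\<in>hom A B. \<chi> (compose (carrier A) w g) = i)"
  proof (cases "carrier B = {}")
    case True
    then have "hom A B \<subseteq> {\<lambda>_. undefined}" by (auto simp: hom_def PiE_iff extensional_def)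
    moreover have "(\<lambda>x\<in>carrier B. x) \<in> hom B B" by (simp add: hom_def)
    ultimately show ?thesis using A B by blast
  next
    case False
    define T where "T = spec B - {0}"
    have "finite T" "T \<subseteq> {0<..}"
      using finite_spec[OF B(1)] spec_nonneg[OF B(1)] unfolding T_def by (auto simp: less_le)
    then obtain n u where u: "decreasing_scale n u" "u ` {..<n} = T"
      by (rule decreasing_scale_enumeration)
    have "spec B \<subseteq> insert 0 (u ` {..<n})" using u(2) by (auto simp: T_def)
    then obtain N where N: "\<forall>\<chi> :: (nat \<Rightarrow> nat) \<Rightarrow> nat. (\<forall>f. \<chi> f < k) \<longrightarrow>
        (\<exists>i. \<exists>w\<in>hom B (word_space n u N). \<forall>g\<in>hom A B. \<chi> (compose (carrier A) w g) = i)"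
      using word_space_ramsey[OF A(1) B(1) u(1)] by blast
    have "0 \<in> S" using zero_in_spec[OF B(1)] False B(2) by blast
    then have "spec (word_space n u N) \<subseteq> S"
      using word_space_spec[of n u N] u(2) B(2) unfolding T_def by blast
    then have "word_space n u N \<in> ?Ob" using word_space_fcous[OF u(1)] by blast
    then show ?thesis using N by blast
  qed
qed

theorem theorem4p2:
  shows "(\<forall>S :: real set. S \<subseteq> {0..} \<longrightarrow>
            ramsey_property {M :: nat ous. fcous M \<and> spec M \<subseteq> S})
         \<and> ramsey_property {M :: nat ous. fcous M}"
  using ramsey_property_spec_subset[of UNIV] ramsey_property_spec_subset by simp

end
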